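(* Let $(M,g)$ be a semi-Riemannian manifold with Levi-Civita connection $\overset{\circ}{\nabla}$, let $\pi,W$ be one-forms on $M$, and let $U$ be the $(1,2)$-tensor field $$U(\omega,X,Y)=\pi(\omega^\sharp)W(X)W(Y)-\frac12\left(W(\omega^\sharp)W(X)\pi(Y)+W(\omega^\sharp)W(Y)\pi(X)\right).$$ Then the pair $(\nabla,U)$ with $\nabla_XY=\overset{\circ}{\nabla}_XY+U(-,X,Y)$ is a Schrödinger connection.
   Context: $X^\flat=g(X,-)$, $\omega^\sharp=g^{-1}(\omega,-)$. For a $(1,2)$-tensor field $U$, $U(-,X,Y)$ denotes the vector field with $\omega(U(-,X,Y))=U(\omega,X,Y)$. A Schrödinger connection is an affine connection $\nabla_XY=\overset{\circ}{\nabla}_XY+U(-,X,Y)$ where $U$ satisfies, for all vector fields $X,Y$ and one-forms $\omega$: (a) $U(\omega,X,Y)=U(\omega,Y,X)$, and (b) $U(\omega,X,Y)+U(\omega,Y,X)+U(X^\flat,\omega^\sharp,Y)+U(X^\flat,Y,\omega^\sharp)+U(Y^\flat,\omega^\sharp,X)+U(Y^\flat,X,\omega^\sharp)=0$. *)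

theory Defs
  imports "HOL-Analysis.Analysis"
begin

text \<open>Local (chart) model of a semi-Riemannian manifold of dimension CARD('n):
  points, tangent vectors and one-forms at a point are elements of real^'n
  (components in the coordinate frame); a one-form omega acts on a vector X
  by omega \<bullet> X.\<close>

definition semi_riemannian_metric :: "(real^'n) set \<Rightarrow> (real^'n \<Rightarrow> real^'n^'n) \<Rightarrow> bool" where
  "semi_riemannian_metric M g \<longleftrightarrow> open M \<and> M \<noteq> {} \<and>
     (\<forall>p\<in>M. transpose (g p) = g p \<and> invertible (g p))"

definition flat :: "(real^'n \<Rightarrow> real^'n^'n) \<Rightarrow> real^'n \<Rightarrow> real^'n \<Rightarrow> real^'n" where
  "flat g p X = g p *v X"

definition sharp :: "(real^'n \<Rightarrow> real^'n^'n) \<Rightarrow> real^'n \<Rightarrow> real^'n \<Rightarrow> real^'n" where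
  "sharp g p \<omega> = matrix_inv (g p) *v \<omega>"

text \<open>The pair (nabla, U), nabla = LC + U(-,X,Y), is a Schroedinger connection iff U satisfies
  conditions (a) and (b) at every point, for all vector fields X, Y and one-forms \<omega>
  (the conditions are tensorial, hence pointwise).\<close>

definition schroedinger_connection ::
  "(real^'n) set \<Rightarrow> (real^'n \<Rightarrow> real^'n^'n) \<Rightarrow> (real^'n \<Rightarrow> real^'n \<Rightarrow> real^'n \<Rightarrow> real^'n \<Rightarrow> real) \<Rightarrow> bool" where
  "schroedinger_connection M g U \<longleftrightarrow>
     (\<forall>p\<in>M. \<forall>\<omega> X Y.
        U p \<omega> X Y = U p \<omega> Y X \<and>
        U p \<omega> X Y + U p \<omega> Y X + U p (flat g p X) (sharp g p \<omega>) Y + U p (flat g p X) Y (sharp g p \<omega>)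
          + U p (flat g p Y) (sharp g p \<omega>) X + U p (flat g p Y) X (sharp g p \<omega>) = 0)"

definition U_piW :: "(real^'n \<Rightarrow> real^'n^'n) \<Rightarrow> (real^'n \<Rightarrow> real^'n) \<Rightarrow> (real^'n \<Rightarrow> real^'n)
    \<Rightarrow> real^'n \<Rightarrow> real^'n \<Rightarrow> real^'n \<Rightarrow> real^'n \<Rightarrow> real" where
  "U_piW g \<pi> W p \<omega> X Y =
     (\<pi> p \<bullet> sharp g p \<omega>) * (W p \<bullet> X) * (W p \<bullet> Y)
     - 1/2 * ((W p \<bullet> sharp g p \<omega>) * (W p \<bullet> X) * (\<pi> p \<bullet> Y)
            + (W p \<bullet> sharp g p \<omega>) * (W p \<bullet> Y) * (\<pi> p \<bullet> X))"

end

theory Submission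
  imports Defs
begin

text \<open>Since \<open>(X\<^sup>\<flat>)\<^sup>\<sharp> = X\<close>, every term of condition (b) is the tensor
  \<open>T(Z,X,Y) = \<pi>(Z)W(X)W(Y) - (W(Z)W(X)\<pi>(Y) + W(Z)W(Y)\<pi>(X))/2\<close> evaluated at a
  permutation of \<open>(\<omega>\<^sup>\<sharp>, X, Y)\<close>, so (b) says that the full symmetrisation of \<open>T\<close>
  vanishes. It does: in the symmetrisation each monomial \<open>\<pi>(A)W(B)W(C)\<close> occurs twice
  with coefficient \<open>1\<close> and four times with coefficient \<open>-1/2\<close>.\<close>

lemma matrix_inv_left:
  fixes A :: "'a::semiring_1^'n^'m"
  assumes "invertible A"
  shows "matrix_inv A ** A = mat 1"
proof -
  have "\<exists>A'. A ** A' = mat 1 \<and> A' ** A = mat 1"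
    using assms unfolding invertible_def .
  then have "A ** matrix_inv A = mat 1 \<and> matrix_inv A ** A = mat 1"
    unfolding matrix_inv_def by (rule someI_ex)
  then show ?thesis ..
qed

lemma sharp_flat:
  assumes "invertible (g p)"
  shows "sharp g p (flat g p X) = X"
  unfolding sharp_def flat_def
  by (simp add: matrix_vector_mul_assoc matrix_inv_left[OF assms])

definition piW_tensor :: "'a::real_inner \<Rightarrow> 'a \<Rightarrow> 'a \<Rightarrow> 'a \<Rightarrow> 'a \<Rightarrow> real" where
  "piW_tensor \<pi> W Z X Y =
     (\<pi> \<bullet> Z) * (W \<bullet> X) * (W \<bullet> Y) - 1/2 * ((W \<bullet> Z) * (W \<bullet> X) * (\<pi> \<bullet> Y) + (W \<bullet> Z) * (W \<bullet> Y) * (\<pi> \<bullet> X))"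

lemma piW_tensor_sym: "piW_tensor \<pi> W Z X Y = piW_tensor \<pi> W Z Y X"
  unfolding piW_tensor_def by (simp add: algebra_simps)

lemma piW_tensor_symmetrisation_eq_0:
  "piW_tensor \<pi> W Z X Y + piW_tensor \<pi> W Z Y X + piW_tensor \<pi> W X Z Y
     + piW_tensor \<pi> W X Y Z + piW_tensor \<pi> W Y Z X + piW_tensor \<pi> W Y X Z = 0"
  unfolding piW_tensor_def by (simp add: algebra_simps)

lemma U_piW_eq_piW_tensor: "U_piW g \<pi> W p \<omega> X Y = piW_tensor (\<pi> p) (W p) (sharp g p \<omega>) X Y"
  unfolding U_piW_def piW_tensor_def ..

theorem mainTheorem7:
  fixes M :: "(real^'n) set" and g :: "real^'n \<Rightarrow> real^'n^'n" and \<pi> W :: "real^'n \<Rightarrow> real^'n"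
  assumes "semi_riemannian_metric M g"
  shows "schroedinger_connection M g (U_piW g \<pi> W)"
  unfolding schroedinger_connection_def U_piW_eq_piW_tensor
proof (intro ballI allI conjI)
  fix p \<omega> X Y
  assume "p \<in> M"
  then have invertible_g: "invertible (g p)"
    using assms unfolding semi_riemannian_metric_def by blast
  show "piW_tensor (\<pi> p) (W p) (sharp g p \<omega>) X Y = piW_tensor (\<pi> p) (W p) (sharp g p \<omega>) Y X"
    by (rule piW_tensor_sym)
  show "piW_tensor (\<pi> p) (W p) (sharp g p \<omega>) X Y + piW_tensor (\<pi> p) (W p) (sharp g p \<omega>) Y X
      + piW_tensor (\<pi> p) (W p) (sharp g p (flat g p X)) (sharp g p \<omega>) Y
      + piW_tensor (\<pi> p) (W p) (sharp g p (flat g p X)) Y (sharp g p \<omega>)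
      + piW_tensor (\<pi> p) (W p) (sharp g p (flat g p Y)) (sharp g p \<omega>) X
      + piW_tensor (\<pi> p) (W p) (sharp g p (flat g p Y)) X (sharp g p \<omega>) = 0"
    by (simp only: sharp_flat[of g p, OF invertible_g] piW_tensor_symmetrisation_eq_0)
qed

end
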